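(* Let $\mathcal{A}$ be a finite abelian group with $|\mathcal{A}|\ge 3$. Let $M_5(p_1,p_2)$ be the graph consisting of the $5$-cycle $v_1v_2v_3v_4v_5v_1$ with the chord $v_3v_5$, together with $p_1\ge 0$ pendant vertices adjacent to $v_1$ and $p_2\ge0$ pendant vertices adjacent to $v_2$, where $(p_1,p_2)\neq(0,0)$. Then $M_5(p_1,p_2)$ is $\mathcal{A}$-vertex magic if and only if $p_1\ge1$, $p_2\ge 1$, and $\mathcal{A}$ contains a square element.
   Context: An element $g\in\mathcal{A}$ is a square if $g\neq 0$ and $g=2h$ for some $h\in\mathcal{A}$. A map $\ell:V(G)\to\mathcal{A}\setminus\{0\}$ is an $\mathcal{A}$-vertex magic labeling if there is $\mu\in\mathcal{A}$ with $\sum_{u\in N(v)}\ell(u)=\mu$ for every vertex $v$; $G$ is $\mathcal{A}$-vertex magic if such a labeling exists. A pendant vertex has degree $1$. *)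

theory Defs
  imports Main
begin

definition nbhd :: "'v set \<Rightarrow> ('v \<Rightarrow> 'v \<Rightarrow> bool) \<Rightarrow> 'v \<Rightarrow> 'v set" where
  "nbhd V adj v = {u \<in> V. adj v u}"

definition vertex_magic_labeling ::
  "'v set \<Rightarrow> ('v \<Rightarrow> 'v \<Rightarrow> bool) \<Rightarrow> ('v \<Rightarrow> 'a::comm_monoid_add) \<Rightarrow> bool" where
  "vertex_magic_labeling V adj l \<longleftrightarrow>
     (\<forall>v\<in>V. l v \<noteq> 0) \<and> (\<exists>\<mu>. \<forall>v\<in>V. (\<Sum>u\<in>nbhd V adj v. l u) = \<mu>)"

definition vertex_magic ::
  "'a::comm_monoid_add itself \<Rightarrow> 'v set \<Rightarrow> ('v \<Rightarrow> 'v \<Rightarrow> bool) \<Rightarrow> bool" where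
  "vertex_magic TYPE('a) V adj \<longleftrightarrow> (\<exists>l :: 'v \<Rightarrow> 'a. vertex_magic_labeling V adj l)"

definition is_square :: "'a::ab_group_add \<Rightarrow> bool" where
  "is_square g \<longleftrightarrow> g \<noteq> 0 \<and> (\<exists>h. g = h + h)"

datatype m5v = Cyc nat | Pend1 nat | Pend2 nat

definition M5_verts :: "nat \<Rightarrow> nat \<Rightarrow> m5v set" where
  "M5_verts p1 p2 = Cyc ` {1..5} \<union> Pend1 ` {..<p1} \<union> Pend2 ` {..<p2}"

fun M5_edge0 :: "m5v \<Rightarrow> m5v \<Rightarrow> bool" where
  "M5_edge0 (Cyc i) (Cyc j) \<longleftrightarrow>
     (i, j) \<in> {(1,2), (2,3), (3,4), (4,5), (5,1), (3,5)}"
| "M5_edge0 (Pend1 _) (Cyc j) \<longleftrightarrow> j = 1"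
| "M5_edge0 (Pend2 _) (Cyc j) \<longleftrightarrow> j = 2"
| "M5_edge0 _ _ \<longleftrightarrow> False"

definition M5_adj :: "m5v \<Rightarrow> m5v \<Rightarrow> bool" where
  "M5_adj u v \<longleftrightarrow> M5_edge0 u v \<or> M5_edge0 v u"

end

theory Submission
  imports Defs
begin

text \<open>A pendant vertex forces the label of its neighbour to be the magic constant \<open>\<mu>\<close>.
  If \<open>v\<^sub>1\<close> and \<open>v\<^sub>2\<close> both carry \<open>\<mu>\<close>, the sums at \<open>v\<^sub>5\<close> and \<open>v\<^sub>3\<close> give
  \<open>\<ell>(v\<^sub>3) + \<ell>(v\<^sub>4) = 0 = \<ell>(v\<^sub>4) + \<ell>(v\<^sub>5)\<close>, so the sum at \<open>v\<^sub>4\<close> shows \<open>\<mu> = 2\<ell>(v\<^sub>3)\<close>,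
  a square. If only \<open>v\<^sub>2\<close> (resp. \<open>v\<^sub>1\<close>) has pendants, the sum at \<open>v\<^sub>1\<close> (resp. \<open>v\<^sub>2\<close>)
  forces \<open>\<ell>(v\<^sub>5) = 0\<close> (resp. \<open>\<ell>(v\<^sub>3) = 0\<close>). Conversely, for \<open>\<mu> = 2h \<noteq> 0\<close> label
  \<open>v\<^sub>1, \<dots>, v\<^sub>5\<close> by \<open>2h, 2h, h, -h, h\<close> and split \<open>-h\<close> into nonzero pendant labels, which is
  possible as soon as the group has a third element besides \<open>0\<close> and the current remainder.\<close>

lemma exists_nonzero_summands:
  fixes c :: "'a::{ab_group_add, finite}"
  assumes "card (UNIV :: 'a set) \<ge> 3" and "k \<ge> 1" and "c \<noteq> 0"
  shows "\<exists>f :: nat \<Rightarrow> 'a. (\<forall>i. f i \<noteq> 0) \<and> (\<Sum>i<k. f i) = c"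
  using assms(2,3)
proof (induction k arbitrary: c rule: nat_induct_at_least)
  case base
  then show ?case by (intro exI[of _ "\<lambda>_. c"]) auto
next
  case (Suc m)
  have "\<not> UNIV \<subseteq> {0, c}"
  proof
    assume "UNIV \<subseteq> {0, c}"
    then have "card (UNIV :: 'a set) \<le> card {0, c}" by (intro card_mono) auto
    also have "\<dots> \<le> 2" by (simp add: card_insert_if)
    finally show False using assms(1) by simp
  qed
  then obtain x where x: "x \<noteq> 0" "x \<noteq> c" by auto
  with Suc.IH[of "c - x"] obtain f where "\<forall>i. f i \<noteq> 0" "(\<Sum>i<m. f i) = c - x"
    by auto
  with x show ?case by (intro exI[of _ "f(m := x)"]) auto
qed

lemma M5_nbhd:
  "nbhd (M5_verts p1 p2) M5_adj (Cyc 1) = insert (Cyc 2) (insert (Cyc 5) (Pend1 ` {..<p1}))"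
  "nbhd (M5_verts p1 p2) M5_adj (Cyc 2) = insert (Cyc 1) (insert (Cyc 3) (Pend2 ` {..<p2}))"
  "nbhd (M5_verts p1 p2) M5_adj (Cyc 3) = {Cyc 2, Cyc 4, Cyc 5}"
  "nbhd (M5_verts p1 p2) M5_adj (Cyc 4) = {Cyc 3, Cyc 5}"
  "nbhd (M5_verts p1 p2) M5_adj (Cyc 5) = {Cyc 1, Cyc 3, Cyc 4}"
  "nbhd (M5_verts p1 p2) M5_adj (Pend1 i) = {Cyc 1}"
  "nbhd (M5_verts p1 p2) M5_adj (Pend2 i) = {Cyc 2}"
  unfolding nbhd_def by (auto simp: M5_verts_def M5_adj_def elim: M5_edge0.elims)

lemma sum_Pend1_image: "sum l (Pend1 ` A) = (\<Sum>i\<in>A. l (Pend1 i))"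
  by (simp add: sum.reindex inj_on_def)

lemma sum_Pend2_image: "sum l (Pend2 ` A) = (\<Sum>i\<in>A. l (Pend2 i))"
  by (simp add: sum.reindex inj_on_def)

lemma ball_M5_verts_iff:
  "(\<forall>v\<in>M5_verts p1 p2. P v) \<longleftrightarrow>
     P (Cyc 1) \<and> P (Cyc 2) \<and> P (Cyc 3) \<and> P (Cyc 4) \<and> P (Cyc 5) \<and>
     (\<forall>i<p1. P (Pend1 i)) \<and> (\<forall>i<p2. P (Pend2 i))"
proof -
  have "{1..5 :: nat} = {1, 2, 3, 4, 5}" by auto
  then show ?thesis by (auto simp: M5_verts_def)
qed

lemma M5_nbhd_sum:
  fixes l :: "m5v \<Rightarrow> 'a::comm_monoid_add"
  shows
  "(\<Sum>u\<in>nbhd (M5_verts p1 p2) M5_adj (Cyc 1). l u) = l (Cyc 2) + l (Cyc 5) + (\<Sum>i<p1. l (Pend1 i))"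
  "(\<Sum>u\<in>nbhd (M5_verts p1 p2) M5_adj (Cyc 2). l u) = l (Cyc 1) + l (Cyc 3) + (\<Sum>i<p2. l (Pend2 i))"
  "(\<Sum>u\<in>nbhd (M5_verts p1 p2) M5_adj (Cyc 3). l u) = l (Cyc 2) + l (Cyc 4) + l (Cyc 5)"
  "(\<Sum>u\<in>nbhd (M5_verts p1 p2) M5_adj (Cyc 4). l u) = l (Cyc 3) + l (Cyc 5)"
  "(\<Sum>u\<in>nbhd (M5_verts p1 p2) M5_adj (Cyc 5). l u) = l (Cyc 1) + l (Cyc 3) + l (Cyc 4)"
  "(\<Sum>u\<in>nbhd (M5_verts p1 p2) M5_adj (Pend1 i). l u) = l (Cyc 1)"
  "(\<Sum>u\<in>nbhd (M5_verts p1 p2) M5_adj (Pend2 i). l u) = l (Cyc 2)"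
  unfolding M5_nbhd by (simp_all add: sum_Pend1_image sum_Pend2_image image_iff add.assoc)

lemma M5_vertex_magic_necessary:
  fixes l :: "m5v \<Rightarrow> 'a::ab_group_add"
  assumes "vertex_magic_labeling (M5_verts p1 p2) M5_adj l" and "(p1, p2) \<noteq> (0, 0)"
  shows "p1 \<ge> 1 \<and> p2 \<ge> 1 \<and> (\<exists>g::'a. is_square g)"
proof -
  obtain \<mu> where nonzero: "l (Cyc 1) \<noteq> 0" "l (Cyc 3) \<noteq> 0" "l (Cyc 5) \<noteq> 0"
    and magic: "\<forall>v\<in>M5_verts p1 p2. (\<Sum>u\<in>nbhd (M5_verts p1 p2) M5_adj v. l u) = \<mu>"
    using assms(1) unfolding vertex_magic_labeling_def ball_M5_verts_iff by blast
  from magic have e1: "l (Cyc 2) + l (Cyc 5) + (\<Sum>i<p1. l (Pend1 i)) = \<mu>"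
    and e2: "l (Cyc 1) + l (Cyc 3) + (\<Sum>i<p2. l (Pend2 i)) = \<mu>"
    and e3: "l (Cyc 2) + l (Cyc 4) + l (Cyc 5) = \<mu>"
    and e4: "l (Cyc 3) + l (Cyc 5) = \<mu>"
    and e5: "l (Cyc 1) + l (Cyc 3) + l (Cyc 4) = \<mu>"
    and pend1: "\<forall>i<p1. l (Cyc 1) = \<mu>"
    and pend2: "\<forall>i<p2. l (Cyc 2) = \<mu>"
    unfolding ball_M5_verts_iff M5_nbhd_sum by blast+
  have l1_eq: "l (Cyc 1) = \<mu>" if "p1 \<ge> 1" using pend1[rule_format, of 0] that by simp
  have l2_eq: "l (Cyc 2) = \<mu>" if "p2 \<ge> 1" using pend2[rule_format, of 0] that by simp
  have p1_pos: "p1 \<ge> 1"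
  proof (rule ccontr)
    assume "\<not> p1 \<ge> 1"
    then have "p1 = 0" "p2 \<ge> 1" using assms(2) by auto
    then have "l (Cyc 5) = 0" using e1 l2_eq by simp
    then show False using nonzero by simp
  qed
  have p2_pos: "p2 \<ge> 1"
  proof (rule ccontr)
    assume "\<not> p2 \<ge> 1"
    then have "p2 = 0" by simp
    then have "l (Cyc 3) = 0" using e2 l1_eq[OF p1_pos] by simp
    then show False using nonzero by simp
  qed
  have "l (Cyc 4) = - l (Cyc 3)"
    using e5 l1_eq[OF p1_pos] by (simp add: add.assoc add_eq_0_iff2 add.commute)
  moreover have "l (Cyc 5) = - l (Cyc 4)"
    using e3 l2_eq[OF p2_pos] by (simp add: add.assoc add_eq_0_iff2 add.commute)
  ultimately have "\<mu> = l (Cyc 3) + l (Cyc 3)" using e4 by simp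
  moreover have "\<mu> \<noteq> 0" using l1_eq[OF p1_pos] nonzero by simp
  ultimately have "is_square \<mu>" unfolding is_square_def by blast
  with p1_pos p2_pos show ?thesis by blast
qed

lemma M5_vertex_magic_sufficient:
  fixes g :: "'a::{ab_group_add, finite}"
  assumes "card (UNIV :: 'a set) \<ge> 3" and "p1 \<ge> 1" and "p2 \<ge> 1" and "is_square g"
  shows "vertex_magic TYPE('a) (M5_verts p1 p2) M5_adj"
proof -
  obtain h where g: "g \<noteq> 0" "g = h + h" using assms(4) unfolding is_square_def by blast
  then have "h \<noteq> 0" "- h \<noteq> 0" by auto
  obtain f1 f2 where f1: "\<forall>i. f1 i \<noteq> 0" "(\<Sum>i<p1. f1 i) = - h"
    and f2: "\<forall>i. f2 i \<noteq> 0" "(\<Sum>i<p2. f2 i) = - h"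
    using exists_nonzero_summands[OF assms(1) _ \<open>- h \<noteq> 0\<close>] assms(2,3) by metis
  define l :: "m5v \<Rightarrow> 'a" where
    "l v = (case v of
        Cyc i \<Rightarrow> (if i \<le> 2 then g else if i = 4 then - h else h)
      | Pend1 i \<Rightarrow> f1 i
      | Pend2 i \<Rightarrow> f2 i)" for v
  have "vertex_magic_labeling (M5_verts p1 p2) M5_adj l"
    unfolding vertex_magic_labeling_def ball_M5_verts_iff M5_nbhd_sum
    using f1 f2 g \<open>h \<noteq> 0\<close> by (intro conjI exI[of _ g]) (simp_all add: l_def add.assoc)
  then show ?thesis unfolding vertex_magic_def by blast
qed

theorem proposition4p5:
  fixes p1 p2 :: nat
  assumes "card (UNIV :: ('a::{ab_group_add, finite}) set) \<ge> 3"
    and "(p1, p2) \<noteq> (0, 0)"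
  shows "vertex_magic TYPE('a) (M5_verts p1 p2) M5_adj \<longleftrightarrow>
           p1 \<ge> 1 \<and> p2 \<ge> 1 \<and> (\<exists>g::'a. is_square g)"
  using M5_vertex_magic_necessary[OF _ assms(2)] M5_vertex_magic_sufficient[OF assms(1)]
  unfolding vertex_magic_def by blast

end
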